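(* For every $0<\alpha<\varepsilon<\frac{1}{2\omega}$ and every $z\in\mathbf H$, $$\Lambda_\alpha(z)\le\frac{\Lambda_\varepsilon(z)}{1-\omega\varepsilon}\le\frac{\Lambda_\alpha(z)}{1-2\omega\varepsilon}.$$
   Context: Let $\mathfrak I=(a,b)\subset\mathbb R$ be a bounded interval, $\mathcal H=L^2(\mathfrak I)$ with inner product $\langle\cdot,\cdot\rangle$ and norm $\|\cdot\|$. Let $A=-\partial_{xx}$ with domain $H^2(\mathfrak I)\cap H^1_0(\mathfrak I)$, $\lambda_1>0$ its first eigenvalue, $\mathcal H^r=D(A^{r/2})$, $\|u\|_r=\|A^{r/2}u\|$, $B=I+A$, and on $\mathcal H^r$ the inner product $(u,v)_r=\langle A^{(r-1)/2}B^{1/2}u,A^{(r-1)/2}B^{1/2}v\rangle$ with norm $|||u|||_r^2=\|u\|_{r-1}^2+\|u\|_r^2$. Set $\omega=\sqrt{(1+\lambda_1)/\lambda_1}$. Let $\mu:(0,\infty)\to[0,\infty)$, $\mu\not\equiv0$, nonincreasing, absolutely continuous, with $\kappa:=\int_0^\infty\mu(s)\,ds\in(0,\infty)$, $\int_0^\infty s\mu(s)\,ds=1$, $\lim_{s\to0^+}\mu(s)<\infty$, and $\mu'+\delta\mu\le0$ a.e. for some $\delta>0$. $\mathcal M=L^2_\mu(\mathbb R^+;\mathcal H^1)$ with norm $\|\eta\|_{\mathcal M}^2=\int_0^\infty\mu(s)\|\eta(s)\|_1^2ds$; $\mathbf H=\mathcal H^1\times\mathcal M$ with $\|(u,\eta)\|_{\mathbf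 H}^2=|||u|||_1^2+\|\eta\|_{\mathcal M}^2$. Given $f\in L^2(\mathfrak I)$, let $F(x)=\int_a^xf(y)\,dy$, and for $\varepsilon>0$ and $z=(u,\eta)\in\mathbf H$ define $$\Lambda_\varepsilon(z)=\|z\|_{\mathbf H}^2+\frac2\kappa\int_0^\infty\mu(s)\langle F,\eta_x(s)\rangle\,ds+\frac2\kappa\|F\|^2-\frac{\varepsilon}{\sqrt\kappa}\int_0^\infty\mu(s)(u,\eta(s))_1\,ds.$$ *)

theory Defs
  imports "HOL-Analysis.Analysis"
begin

text \<open>Concrete setting on the bounded interval (a,b): real-valued functions
  real => real are used as representatives of elements of L2(a,b).\<close>

definition L2 :: "real \<Rightarrow> real \<Rightarrow> (real \<Rightarrow> real) \<Rightarrow> bool" where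
  "L2 a b u \<longleftrightarrow> u \<in> borel_measurable (lebesgue_on {a<..<b})
      \<and> integrable (lebesgue_on {a<..<b}) (\<lambda>x. (u x)^2)"

definition ip :: "real \<Rightarrow> real \<Rightarrow> (real \<Rightarrow> real) \<Rightarrow> (real \<Rightarrow> real) \<Rightarrow> real" where
  "ip a b u v = integral\<^sup>L (lebesgue_on {a<..<b}) (\<lambda>x. u x * v x)"

definition prim :: "real \<Rightarrow> (real \<Rightarrow> real) \<Rightarrow> real \<Rightarrow> real" where
  "prim a g x = integral\<^sup>L (lebesgue_on {a<..x}) g"

text \<open>g is the (weak) derivative of u in H1(a,b): u is a.e. equal to an
  absolutely continuous function c + int_a^x g with g in L2.\<close>
definition has_wderiv :: "real \<Rightarrow> real \<Rightarrow> (real \<Rightarrow> real) \<Rightarrow> (real \<Rightarrow> real) \<Rightarrow> bool" where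
  "has_wderiv a b u g \<longleftrightarrow> L2 a b g \<and>
     (\<exists>c. AE x in lebesgue_on {a<..<b}. u x = c + prim a g x)"

definition H1 :: "real \<Rightarrow> real \<Rightarrow> (real \<Rightarrow> real) \<Rightarrow> bool" where
  "H1 a b u \<longleftrightarrow> (\<exists>g. has_wderiv a b u g)"

text \<open>H1_0(a,b): H1 functions vanishing at both endpoints.\<close>
definition H10 :: "real \<Rightarrow> real \<Rightarrow> (real \<Rightarrow> real) \<Rightarrow> bool" where
  "H10 a b u \<longleftrightarrow> (\<exists>g. L2 a b g \<and> integral\<^sup>L (lebesgue_on {a<..<b}) g = 0 \<and>
     (AE x in lebesgue_on {a<..<b}. u x = prim a g x))"

text \<open>Weak derivative u_x (determined up to null sets).\<close>
definition wd :: "real \<Rightarrow> real \<Rightarrow> (real \<Rightarrow> real) \<Rightarrow> (real \<Rightarrow> real)" where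
  "wd a b u = (SOME g. has_wderiv a b u g)"

text \<open>Domain of A = -d^2/dx^2: H2 intersected with H1_0.\<close>
definition domA :: "real \<Rightarrow> real \<Rightarrow> (real \<Rightarrow> real) \<Rightarrow> bool" where
  "domA a b u \<longleftrightarrow> H10 a b u \<and> H1 a b (wd a b u)"

definition opA :: "real \<Rightarrow> real \<Rightarrow> (real \<Rightarrow> real) \<Rightarrow> (real \<Rightarrow> real)" where
  "opA a b u = (\<lambda>x. - wd a b (wd a b u) x)"

definition is_eigenvalue_A :: "real \<Rightarrow> real \<Rightarrow> real \<Rightarrow> bool" where
  "is_eigenvalue_A a b l \<longleftrightarrow> (\<exists>u. domA a b u \<and>
      \<not> (AE x in lebesgue_on {a<..<b}. u x = 0) \<and>
      (AE x in lebesgue_on {a<..<b}. opA a b u x = l * u x))"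

definition lambda1 :: "real \<Rightarrow> real \<Rightarrow> real" where
  "lambda1 a b = Inf {l. is_eigenvalue_A a b l}"

definition omega :: "real \<Rightarrow> real \<Rightarrow> real" where
  "omega a b = sqrt ((1 + lambda1 a b) / lambda1 a b)"

text \<open>||u||_1 = ||A^(1/2) u|| = ||u_x|| on H1 = D(A^(1/2)) = H1_0.\<close>
definition norm1 :: "real \<Rightarrow> real \<Rightarrow> (real \<Rightarrow> real) \<Rightarrow> real" where
  "norm1 a b u = sqrt (ip a b (wd a b u) (wd a b u))"

text \<open>(u,v)_1 = <B^(1/2)u, B^(1/2)v> = <u,v> + <u_x,v_x>.\<close>
definition ip1 :: "real \<Rightarrow> real \<Rightarrow> (real \<Rightarrow> real) \<Rightarrow> (real \<Rightarrow> real) \<Rightarrow> real" where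
  "ip1 a b u v = ip a b u v + ip a b (wd a b u) (wd a b v)"

definition tnorm1_sq :: "real \<Rightarrow> real \<Rightarrow> (real \<Rightarrow> real) \<Rightarrow> real" where
  "tnorm1_sq a b u = ip a b u u + (norm1 a b u)^2"

text \<open>Memory space M = L2_mu(R+; H1). Strong measurability is expressed through
  weak measurability (Pettis; H1 is separable).\<close>
definition inM :: "real \<Rightarrow> real \<Rightarrow> (real \<Rightarrow> real) \<Rightarrow> (real \<Rightarrow> real \<Rightarrow> real) \<Rightarrow> bool" where
  "inM a b \<mu> \<eta> \<longleftrightarrow>
     (AE s in lebesgue_on {0<..}. H10 a b (\<eta> s)) \<and>
     (\<forall>v. H10 a b v \<longrightarrow> (\<lambda>s. ip1 a b v (\<eta> s)) \<in> borel_measurable (lebesgue_on {0<..})) \<and>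
     integrable (lebesgue_on {0<..}) (\<lambda>s. \<mu> s * (norm1 a b (\<eta> s))^2)"

definition normM_sq :: "real \<Rightarrow> real \<Rightarrow> (real \<Rightarrow> real) \<Rightarrow> (real \<Rightarrow> real \<Rightarrow> real) \<Rightarrow> real" where
  "normM_sq a b \<mu> \<eta> = integral\<^sup>L (lebesgue_on {0<..}) (\<lambda>s. \<mu> s * (norm1 a b (\<eta> s))^2)"

definition inH :: "real \<Rightarrow> real \<Rightarrow> (real \<Rightarrow> real) \<Rightarrow> (real \<Rightarrow> real) \<times> (real \<Rightarrow> real \<Rightarrow> real) \<Rightarrow> bool" where
  "inH a b \<mu> z \<longleftrightarrow> H10 a b (fst z) \<and> inM a b \<mu> (snd z)"

definition normH_sq :: "real \<Rightarrow> real \<Rightarrow> (real \<Rightarrow> real) \<Rightarrow> (real \<Rightarrow> real) \<times> (real \<Rightarrow> real \<Rightarrow> real) \<Rightarrow> real" where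
  "normH_sq a b \<mu> z = tnorm1_sq a b (fst z) + normM_sq a b \<mu> (snd z)"

definition kappa :: "(real \<Rightarrow> real) \<Rightarrow> real" where
  "kappa \<mu> = integral\<^sup>L (lebesgue_on {0<..}) \<mu>"

definition Lambda :: "real \<Rightarrow> real \<Rightarrow> (real \<Rightarrow> real) \<Rightarrow> (real \<Rightarrow> real) \<Rightarrow> real
    \<Rightarrow> (real \<Rightarrow> real) \<times> (real \<Rightarrow> real \<Rightarrow> real) \<Rightarrow> real" where
  "Lambda a b f \<mu> \<epsilon> z =
     (let F = prim a f; u = fst z; \<eta> = snd z; \<kappa> = kappa \<mu> in
      normH_sq a b \<mu> z
      + 2 / \<kappa> * integral\<^sup>L (lebesgue_on {0<..}) (\<lambda>s. \<mu> s * ip a b F (wd a b (\<eta> s)))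
      + 2 / \<kappa> * ip a b F F
      - \<epsilon> / sqrt \<kappa> * integral\<^sup>L (lebesgue_on {0<..}) (\<lambda>s. \<mu> s * ip1 a b u (\<eta> s)))"

definition abs_cont_pos :: "(real \<Rightarrow> real) \<Rightarrow> bool" where
  "abs_cont_pos g \<longleftrightarrow> (\<forall>e>0. \<exists>d>0. \<forall>(n::nat) (l::nat \<Rightarrow> real) r.
      (\<forall>i<n. 0 < l i \<and> l i \<le> r i) \<and>
      (\<forall>i<n. \<forall>j<n. i \<noteq> j \<longrightarrow> {l i<..<r i} \<inter> {l j<..<r j} = {}) \<and>
      (\<Sum>i<n. r i - l i) < d \<longrightarrow> (\<Sum>i<n. \<bar>g (r i) - g (l i)\<bar>) < e)"

end

(* Write Lambda_eps(z) = P(z) - eps Y(z), where P = Lambda_0 and Y is the memory coupling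
   (1 / sqrt kappa) int mu(s) (u, eta(s))_1 ds.  Both inequalities are elementary consequences of
   P >= 0 and |Y| <= omega P.  By a weighted Young inequality the F-terms of P absorb at most half
   of the memory norm, so P >= ||z||^2 / 2; by Young's inequality again together with the Poincare
   inequality lambda_1 ||v||^2 <= ||v_x||^2, |Y| <= omega ||z||^2 / 2.

   The bulk of the work is the identification lambda_1 = (pi / (b - a))^2 for the concrete
   eigenvalue problem of -d^2/dx^2 on H^2 /\ H^1_0: sin (pi (x - a) / (b - a)) is an
   eigenfunction, and every eigenvalue is at least (pi / (b - a))^2 by the sharp Wirtinger
   inequality, proved with Picone's identity.  This needs a small calculus of primitives of
   integrable functions on (a, b): continuity, a product rule (by Fubini) and the fact that a
   function with vanishing primitive vanishes almost everywhere, which makes weak derivatives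
   unique. *)

theory Submission
  imports Defs
begin

lemma abs_mult_le_weighted_squares:
  fixes x y t :: real
  assumes "t > 0"
  shows "2 * \<bar>x * y\<bar> \<le> t * x\<^sup>2 + y\<^sup>2 / t"
proof -
  have "0 \<le> (t * \<bar>x\<bar> - \<bar>y\<bar>)\<^sup>2 / t" using assms by simp
  also have "\<dots> = t * x\<^sup>2 + y\<^sup>2 / t - 2 * \<bar>x * y\<bar>"
    using assms by (simp add: power2_eq_square field_simps abs_mult)
  finally show ?thesis by simp
qed

lemma perturbation_bounds:
  fixes P Y w \<alpha> \<epsilon> :: real
  assumes "0 \<le> P" and Y: "\<bar>Y\<bar> \<le> w * P" and "0 < w" "0 < \<alpha>" "\<alpha> < \<epsilon>" "\<epsilon> < 1 / (2 * w)"
  shows "P - \<alpha> * Y \<le> (P - \<epsilon> * Y) / (1 - w * \<epsilon>)"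
    and "(P - \<epsilon> * Y) / (1 - w * \<epsilon>) \<le> (P - \<alpha> * Y) / (1 - 2 * w * \<epsilon>)"
proof -
  have "w * \<epsilon> < 1 / 2" "0 < w * \<epsilon>" using assms by (simp_all add: field_simps)
  then have D1: "0 < 1 - w * \<epsilon>" and D2: "0 < 1 - 2 * w * \<epsilon>" by simp_all
  have scaled: "\<bar>c * Y\<bar> \<le> w * \<epsilon> * P" if "\<bar>c\<bar> \<le> \<epsilon>" for c
  proof -
    have "\<bar>c * Y\<bar> \<le> \<epsilon> * (w * P)"
      unfolding abs_mult using that Y by (intro mult_mono) auto
    then show ?thesis by (simp add: algebra_simps)
  qed
  have "\<bar>\<epsilon> - \<alpha> + w * \<epsilon> * \<alpha>\<bar> \<le> \<epsilon>"
    using assms \<open>w * \<epsilon> < 1 / 2\<close> \<open>0 < w * \<epsilon>\<close> mult_strict_right_mono[of "w * \<epsilon>" 1 \<alpha>] by auto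
  from scaled[OF this]
  have "(1 - w * \<epsilon>) * (P - \<alpha> * Y) \<le> P - \<epsilon> * Y" by (simp add: algebra_simps abs_le_iff)
  then show "P - \<alpha> * Y \<le> (P - \<epsilon> * Y) / (1 - w * \<epsilon>)"
    using D1 by (simp add: pos_le_divide_eq mult.commute)
  have "0 \<le> (2 * \<epsilon> - \<alpha>) * (1 - w * \<epsilon>)" "0 \<le> w * \<epsilon> * (2 * \<epsilon> - \<alpha>)"
    using assms D1 \<open>0 < w * \<epsilon>\<close> by simp_all
  moreover have "(\<epsilon> - \<alpha> - w * \<epsilon> * (2 * \<epsilon> - \<alpha>)) + \<epsilon> = (2 * \<epsilon> - \<alpha>) * (1 - w * \<epsilon>)"
    by (simp add: algebra_simps)
  ultimately have "\<bar>\<epsilon> - \<alpha> - w * \<epsilon> * (2 * \<epsilon> - \<alpha>)\<bar> \<le> \<epsilon>"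
    using \<open>0 < \<alpha>\<close> unfolding abs_le_iff by linarith
  from scaled[OF this]
  have "(P - \<epsilon> * Y) * (1 - 2 * w * \<epsilon>) \<le> (P - \<alpha> * Y) * (1 - w * \<epsilon>)"
    by (simp add: algebra_simps abs_le_iff)
  then show "(P - \<epsilon> * Y) / (1 - w * \<epsilon>) \<le> (P - \<alpha> * Y) / (1 - 2 * w * \<epsilon>)"
    using D1 D2 by (simp add: divide_simps)
qed

text \<open>No integrability of \<open>f\<close> is needed: a non-integrable \<open>f\<close> has Bochner integral \<open>0\<close>.\<close>

lemma abs_integral_le_AE_bound:
  fixes f g :: "'a \<Rightarrow> real"
  assumes g: "integrable M g" and bound: "AE x in M. \<bar>f x\<bar> \<le> g x"
  shows "\<bar>integral\<^sup>L M f\<bar> \<le> integral\<^sup>L M g"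
proof (cases "integrable M f")
  case True
  have "\<bar>integral\<^sup>L M f\<bar> \<le> integral\<^sup>L M (\<lambda>x. \<bar>f x\<bar>)" by (rule integral_abs_bound)
  also have "\<dots> \<le> integral\<^sup>L M g"
    using True by (intro integral_mono_AE[OF _ g bound]) simp
  finally show ?thesis .
next
  case False
  have "AE x in M. 0 \<le> g x" using bound by eventually_elim linarith
  then have "0 \<le> integral\<^sup>L M g" by (rule integral_nonneg_AE)
  with False show ?thesis by (simp add: not_integrable_integral_eq)
qed

lemma weighted_affine_integral:
  fixes w q :: "'a \<Rightarrow> real"
  assumes "integrable M w" and "integrable M (\<lambda>s. w s * q s)"
  shows "integrable M (\<lambda>s. w s * (c + d * q s))"
    and "integral\<^sup>L M (\<lambda>s. w s * (c + d * q s)) = c * integral\<^sup>L M w + d * integral\<^sup>L M (\<lambda>s. w s * q s)"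
proof -
  have eq: "(\<lambda>s. w s * (c + d * q s)) = (\<lambda>s. c * w s + d * (w s * q s))"
    by (simp add: fun_eq_iff algebra_simps)
  show "integrable M (\<lambda>s. w s * (c + d * q s))" unfolding eq using assms by simp
  show "integral\<^sup>L M (\<lambda>s. w s * (c + d * q s)) = c * integral\<^sup>L M w + d * integral\<^sup>L M (\<lambda>s. w s * q s)"
    unfolding eq using assms by simp
qed

lemma sigma_finite_lebesgue: "sigma_finite_measure (lebesgue :: real measure)"
proof
  have "\<exists>n::nat. x \<in> {-real n..real n}" for x :: real
  proof -
    obtain n :: nat where "\<bar>x\<bar> \<le> real n" using real_arch_simple by blast
    then show ?thesis by (intro exI[of _ n]) (auto simp: abs_le_iff)
  qed
  then show "\<exists>A. countable A \<and> A \<subseteq> sets lebesgue \<and> \<Union> A = space (lebesgue :: real measure)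
      \<and> (\<forall>a\<in>A. emeasure lebesgue a \<noteq> \<infinity>)"
    by (intro exI[of _ "range (\<lambda>n::nat. {-real n..real n})"]) auto
qed

lemma pair_sigma_finite_lebesgue: "pair_sigma_finite (lebesgue :: real measure) (lebesgue :: real measure)"
  unfolding pair_sigma_finite_def using sigma_finite_lebesgue by simp

lemma fst_borel_measurable_lebesgue [measurable]:
  "(\<lambda>p::real \<times> real. fst p) \<in> borel_measurable (lebesgue \<Otimes>\<^sub>M lebesgue)"
  using measurable_compose[OF measurable_fst id_borel_measurable_lebesgue] by (simp add: id_def)

lemma snd_borel_measurable_lebesgue [measurable]:
  "(\<lambda>p::real \<times> real. snd p) \<in> borel_measurable (lebesgue \<Otimes>\<^sub>M lebesgue)"
  using measurable_compose[OF measurable_snd id_borel_measurable_lebesgue] by (simp add: id_def)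

lemma integrable_product_lebesgue:
  fixes g h :: "real \<Rightarrow> real"
  assumes g: "integrable lebesgue g" and h: "integrable lebesgue h"
  shows "integrable (lebesgue \<Otimes>\<^sub>M lebesgue) (\<lambda>p. g (fst p) * h (snd p))"
proof (rule pair_sigma_finite.Fubini_integrable[OF pair_sigma_finite_lebesgue])
  show "(\<lambda>p. g (fst p) * h (snd p)) \<in> borel_measurable (lebesgue \<Otimes>\<^sub>M lebesgue)"
    using measurable_compose[OF measurable_fst borel_measurable_integrable[OF g]]
      measurable_compose[OF measurable_snd borel_measurable_integrable[OF h]]
    by (rule borel_measurable_times)
  have "integrable lebesgue (\<lambda>x. \<bar>g x\<bar> * (\<integral>y. \<bar>h y\<bar> \<partial>lebesgue))"
    using g by simp
  then show "integrable lebesgue (\<lambda>x. \<integral>y. norm (g (fst (x, y)) * h (snd (x, y))) \<partial>lebesgue)"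
    by (simp add: abs_mult)
qed (use h in simp)

lemma integrable_dominated_by_product_lebesgue:
  fixes g h :: "real \<Rightarrow> real" and F :: "real \<Rightarrow> real \<Rightarrow> real"
  assumes "integrable lebesgue g" "integrable lebesgue h"
    and "case_prod F \<in> borel_measurable (lebesgue \<Otimes>\<^sub>M lebesgue)" and "\<And>t s. \<bar>F t s\<bar> \<le> \<bar>g t * h s\<bar>"
  shows "integrable (lebesgue \<Otimes>\<^sub>M lebesgue) (case_prod F)"
  using assms(3,4)
  by (intro Bochner_Integration.integrable_bound[OF integrable_product_lebesgue[OF assms(1,2)]] AE_I2)
    (auto simp: split_beta')

lemma borel_measurable_lebesgue_on_AE_cong:
  fixes f g :: "real \<Rightarrow> real"
  assumes f: "f \<in> borel_measurable (lebesgue_on S)" and S: "S \<in> sets lebesgue"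
    and eq: "AE x in lebesgue_on S. f x = g x"
  shows "g \<in> borel_measurable (lebesgue_on S)"
proof -
  have "AE x in lebesgue. x \<in> S \<longrightarrow> f x = g x"
    using eq S by (simp add: AE_restrict_space_iff)
  then have eq': "AE x in lebesgue. indicator S x * f x = indicator S x * g x"
    by eventually_elim (simp add: indicator_def)
  have "(\<lambda>x. indicator S x * f x) \<in> borel_measurable lebesgue"
    using f S by (simp add: borel_measurable_restrict_space_iff)
  from borel_measurable_AE[OF this eq'] show ?thesis
    using S by (simp add: borel_measurable_restrict_space_iff)
qed

lemma lebesgue_on_finite_diff:
  fixes f :: "real \<Rightarrow> real"
  assumes X: "finite X" and diff: "(A - B) \<union> (B - A) \<subseteq> X"
    and A: "A \<in> sets lebesgue" and B: "B \<in> sets lebesgue"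
  shows "integral\<^sup>L (lebesgue_on A) f = integral\<^sup>L (lebesgue_on B) f"
    and "integrable (lebesgue_on A) f \<longleftrightarrow> integrable (lebesgue_on B) f"
proof -
  have countable: "countable X" using X by (rule countable_finite)
  have null: "emeasure lebesgue {x :: real} = 0" and single: "{x :: real} \<in> sets lebesgue" for x
    by simp_all
  note discrete = countable diff null single
  show "integral\<^sup>L (lebesgue_on A) f = integral\<^sup>L (lebesgue_on B) f"
    using set_integral_discrete_difference[OF discrete, of f]
    by (simp add: integral_restrict_space A B set_lebesgue_integral_def)
  show "integrable (lebesgue_on A) f \<longleftrightarrow> integrable (lebesgue_on B) f"
    using set_integrable_discrete_difference[OF discrete, of f]
    by (simp add: integrable_restrict_space A B set_integrable_def)
qed

lemma integrable_Ioo_iff_Icc: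
  "integrable (lebesgue_on {a<..<b}) g \<longleftrightarrow> integrable (lebesgue_on {a..b}) (g :: real \<Rightarrow> real)"
  by (rule lebesgue_on_finite_diff(2)[where X="{a, b}"]) auto

lemma integrable_Ioo_imp_Ioc:
  assumes "integrable (lebesgue_on {a<..<b}) (g :: real \<Rightarrow> real)" "x \<le> b"
  shows "integrable (lebesgue_on {a<..x}) g"
proof (cases "a \<le> x")
  case True
  have "integrable (lebesgue_on {a..b}) g" using assms(1) by (simp add: integrable_Ioo_iff_Icc)
  then have "integrable (lebesgue_on {a..x}) g"
    by (rule Equivalence_Lebesgue_Henstock_Integration.integrable_subinterval) (use assms True in auto)
  moreover have "integrable (lebesgue_on {a<..x}) g \<longleftrightarrow> integrable (lebesgue_on {a..x}) g"
    by (rule lebesgue_on_finite_diff(2)[where X="{a}"]) auto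
  ultimately show ?thesis by simp
qed simp

lemma not_AE_zero_if_pos:
  fixes u :: "real \<Rightarrow> real"
  assumes "a < b" and "\<And>x. x \<in> {a<..<b} \<Longrightarrow> 0 < u x"
  shows "\<not> (AE x in lebesgue_on {a<..<b}. u x = 0)"
proof
  assume "AE x in lebesgue_on {a<..<b}. u x = 0"
  moreover have "AE x in lebesgue_on {a<..<b}. 0 < u x" by (rule AE_I2) (use assms(2) in auto)
  ultimately have "AE x in lebesgue_on {a<..<b}. False" by eventually_elim simp
  then have "ae_filter (lebesgue_on {a<..<b}) = bot" by (simp add: trivial_limit_def)
  then have "emeasure (lebesgue_on {a<..<b}) {a<..<b} = 0" by (simp add: ae_filter_eq_bot_iff)
  with \<open>a < b\<close> show False by (simp add: emeasure_restrict_space)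
qed

lemma continuous_on_AE_eq_imp_eq:
  fixes F G :: "real \<Rightarrow> real"
  assumes "a < b" "continuous_on {a..b} F" "continuous_on {a..b} G"
    and eq: "AE x in lebesgue_on {a<..<b}. F x = G x" and "x \<in> {a..b}"
  shows "F x = G x"
proof -
  have cont: "continuous_on {a..b} (\<lambda>y. F y - G y)" using assms by (intro continuous_intros)
  define C where "C = {y \<in> {a..b}. F y - G y = 0}"
  have "closed C" unfolding C_def by (rule continuous_closed_preimage_constant[OF cont]) simp
  moreover have "AE y \<in> {a<..<b} in lebesgue. y \<in> C"
    using eq by (subst (asm) AE_restrict_space_iff) (auto simp: C_def elim: eventually_mono)
  ultimately have "y \<in> C" if "y \<in> {a<..<b}" for y
    using mem_closed_if_AE_lebesgue_open[OF _ _ _ that] by simp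
  moreover have "continuous_on (closure {a<..<b}) (\<lambda>y. F y - G y)" using cont \<open>a < b\<close> by simp
  ultimately show ?thesis
    using continuous_constant_on_closure[of "{a<..<b}" "\<lambda>y. F y - G y" 0 x] assms
    by (auto simp: C_def)
qed

lemma AE_zero_if_halfline_integrals_zero_lborel:
  fixes f :: "real \<Rightarrow> real"
  assumes f: "integrable lborel f" and zero: "\<And>x. (\<integral>t. indicator {x<..} t * f t \<partial>lborel) = 0"
  shows "AE t in lborel. f t = 0"
proof -
  have pos_part: "emeasure (density lborel (\<lambda>t. ennreal (max 0 (\<phi> t)))) {x<..}
      = ennreal (\<integral>t. indicator {x<..} t * max 0 (\<phi> t) \<partial>lborel)"
    if \<phi>: "integrable lborel \<phi>" for \<phi> :: "real \<Rightarrow> real" and x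
  proof -
    have "integrable lborel (\<lambda>t. max 0 (\<phi> t) * indicator {x<..} t)"
      using \<phi> by (intro integrable_real_mult_indicator) auto
    then have "integrable lborel (\<lambda>t. indicator {x<..} t * max 0 (\<phi> t))"
      by (simp add: mult.commute)
    moreover have "emeasure (density lborel (\<lambda>t. ennreal (max 0 (\<phi> t)))) {x<..}
        = (\<integral>\<^sup>+t. ennreal (indicator {x<..} t * max 0 (\<phi> t)) \<partial>lborel)"
      using borel_measurable_integrable[OF \<phi>]
      by (subst emeasure_density) (auto intro!: nn_integral_cong simp: indicator_def)
    ultimately show ?thesis by (simp add: nn_integral_eq_integral)
  qed
  have split: "indicator {x<..} t * f t
      = indicator {x<..} t * max 0 (f t) - indicator {x<..} t * max 0 (- f t)" for x t
    by (simp add: max_def algebra_simps)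
  have pos_neg: "(\<integral>t. indicator {x<..} t * max 0 (f t) \<partial>lborel)
      = (\<integral>t. indicator {x<..} t * max 0 (- f t) \<partial>lborel)" for x
    using zero[of x] f unfolding split
    by (subst (asm) Bochner_Integration.integral_diff)
      (auto intro!: integrable_real_mult_indicator simp: mult.commute[of "indicator _ _"])
  have "density lborel (\<lambda>t. ennreal (max 0 (f t))) = density lborel (\<lambda>t. ennreal (max 0 (- f t)))"
    by (rule measure_eqI_lessThan) (use f pos_neg in \<open>simp_all add: pos_part\<close>)
  then have "AE t in lborel. ennreal (max 0 (f t)) = ennreal (max 0 (- f t))"
    using f by (intro sigma_finite_measure.density_unique[OF sigma_finite_lborel]) auto
  then show ?thesis
    by eventually_elim (auto simp: max_def split: if_splits)
qed

lemma AE_zero_if_halfline_integrals_zero: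
  fixes f :: "real \<Rightarrow> real"
  assumes f: "integrable lebesgue f" and zero: "\<And>x. (\<integral>t. indicator {x<..} t * f t \<partial>lebesgue) = 0"
  shows "AE t in lebesgue. f t = 0"
proof -
  obtain f' where f': "f' \<in> borel_measurable lborel" and eq: "AE t in lborel. f t = f' t"
    using completion_ex_borel_measurable_real[of f lborel] borel_measurable_integrable[OF f] by auto
  have eq': "AE t in lebesgue. f t = f' t" using AE_completion[OF eq] by simp
  have "integrable lebesgue f'"
    using integrable_cong_AE_imp[OF f _ eq'] f' by (simp add: measurable_completion)
  then have f'_int: "integrable lborel f'" using integrable_completion[OF f'] by simp
  have "(\<integral>t. indicator {x<..} t * f' t \<partial>lborel) = (\<integral>t. indicator {x<..} t * f t \<partial>lebesgue)" for x
  proof -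
    have "(\<integral>t. indicator {x<..} t * f' t \<partial>lborel) = (\<integral>t. indicator {x<..} t * f' t \<partial>lebesgue)"
      using f' by (intro integral_completion[symmetric]) simp
    also have "\<dots> = (\<integral>t. indicator {x<..} t * f t \<partial>lebesgue)"
    proof (rule integral_cong_AE)
      show "(\<lambda>t. indicator {x<..} t * f' t) \<in> borel_measurable lebesgue"
        using f' by (simp add: measurable_completion)
      show "(\<lambda>t. indicator {x<..} t * f t) \<in> borel_measurable lebesgue"
        using borel_measurable_integrable[OF integrable_real_mult_indicator[OF _ f, of "{x<..}"]]
        by (simp add: mult.commute)
      show "AE t in lebesgue. indicator {x<..} t * f' t = indicator {x<..} t * f t"
        using eq' by eventually_elim simp
    qed
    finally show ?thesis .
  qed
  then have "AE t in lborel. f' t = 0"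
    using zero f'_int by (intro AE_zero_if_halfline_integrals_zero_lborel) auto
  then have "AE t in lebesgue. f' t = 0" by (rule AE_completion)
  with eq' show ?thesis by eventually_elim simp
qed

lemma L2_integrable_mult:
  assumes "L2 a b u" "L2 a b v"
  shows "integrable (lebesgue_on {a<..<b}) (\<lambda>x. u x * v x)"
proof (rule Bochner_Integration.integrable_bound)
  show "integrable (lebesgue_on {a<..<b}) (\<lambda>x. (u x)\<^sup>2 + (v x)\<^sup>2)"
    using assms by (auto simp: L2_def)
  have "\<bar>u x * v x\<bar> \<le> (u x)\<^sup>2 + (v x)\<^sup>2" for x
    using abs_mult_le_weighted_squares[of 1 "u x" "v x"] zero_le_power2[of "u x"] by simp
  then show "AE x in lebesgue_on {a<..<b}. norm (u x * v x) \<le> norm ((u x)\<^sup>2 + (v x)\<^sup>2)"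
    by simp
qed (use assms in \<open>auto simp: L2_def\<close>)

lemma L2_integrable:
  assumes "L2 a b u"
  shows "integrable (lebesgue_on {a<..<b}) u"
proof (rule Bochner_Integration.integrable_bound)
  interpret finite_measure "lebesgue_on {a<..<b}"
    by (rule finite_measure_lebesgue_on) simp
  show "integrable (lebesgue_on {a<..<b}) (\<lambda>x. 1 + (u x)\<^sup>2)"
    using assms by (auto simp: L2_def)
  have "\<bar>u x\<bar> \<le> 1 + (u x)\<^sup>2" for x
    using abs_mult_le_weighted_squares[of 1 1 "u x"] by simp
  then show "AE x in lebesgue_on {a<..<b}. norm (u x) \<le> norm (1 + (u x)\<^sup>2)"
    by simp
qed (use assms in \<open>auto simp: L2_def\<close>)

lemma continuous_on_imp_L2:
  fixes f :: "real \<Rightarrow> real"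
  assumes "continuous_on {a..b} f"
  shows "L2 a b f"
  unfolding L2_def
proof
  show "f \<in> borel_measurable (lebesgue_on {a<..<b})"
    by (rule continuous_imp_measurable_on_sets_lebesgue[OF continuous_on_subset[OF assms]]) auto
  have "continuous_on {a..b} (\<lambda>x. (f x)\<^sup>2)" using assms by (intro continuous_intros)
  then show "integrable (lebesgue_on {a<..<b}) (\<lambda>x. (f x)\<^sup>2)"
    by (simp add: integrable_Ioo_iff_Icc continuous_imp_integrable_real)
qed

lemma L2_AE_cong:
  assumes u: "L2 a b u" and eq: "AE x in lebesgue_on {a<..<b}. u x = v x"
  shows "L2 a b v"
proof -
  have v: "v \<in> borel_measurable (lebesgue_on {a<..<b})"
    using u by (intro borel_measurable_lebesgue_on_AE_cong[OF _ _ eq]) (auto simp: L2_def)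
  have sq_eq: "AE x in lebesgue_on {a<..<b}. (u x)\<^sup>2 = (v x)\<^sup>2"
    using eq by eventually_elim simp
  have "integrable (lebesgue_on {a<..<b}) (\<lambda>x. (u x)\<^sup>2)" using u by (simp add: L2_def)
  then have "integrable (lebesgue_on {a<..<b}) (\<lambda>x. (v x)\<^sup>2)"
    by (rule integrable_cong_AE_imp[OF _ _ sq_eq]) (use v in simp)
  with v show ?thesis by (simp add: L2_def)
qed

lemma ip_self_nonneg: "0 \<le> ip a b u u"
  unfolding ip_def by (rule integral_nonneg_AE) simp

lemma ip_self_pos:
  assumes "L2 a b u" and "\<not> (AE x in lebesgue_on {a<..<b}. u x = 0)"
  shows "0 < ip a b u u"
proof -
  have "ip a b u u \<noteq> 0"
  proof
    assume "ip a b u u = 0"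
    then have "AE x in lebesgue_on {a<..<b}. u x * u x = 0"
      using L2_integrable_mult[OF assms(1,1)]
      by (subst (asm) ip_def, subst (asm) integral_nonneg_eq_0_iff_AE) auto
    with assms(2) show False by (auto elim: eventually_mono)
  qed
  with ip_self_nonneg[of a b u] show ?thesis by simp
qed

lemma ip_abs_le_weighted:
  assumes "L2 a b u" "L2 a b v" "t > 0"
  shows "2 * \<bar>ip a b u v\<bar> \<le> t * ip a b u u + ip a b v v / t"
proof -
  let ?M = "lebesgue_on {a<..<b}"
  have uu: "integrable ?M (\<lambda>x. u x * u x)" and vv: "integrable ?M (\<lambda>x. v x * v x)"
    using assms by (simp_all add: L2_integrable_mult)
  have "\<bar>u x * v x\<bar> \<le> (t * (u x * u x) + (v x * v x) / t) / 2" for x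
    using abs_mult_le_weighted_squares[OF assms(3), of "u x" "v x"] by (simp add: power2_eq_square)
  then have "\<bar>ip a b u v\<bar> \<le> integral\<^sup>L ?M (\<lambda>x. (t * (u x * u x) + (v x * v x) / t) / 2)"
    unfolding ip_def using uu vv by (intro abs_integral_le_AE_bound AE_I2) auto
  also have "\<dots> = (t * ip a b u u + ip a b v v / t) / 2"
    unfolding ip_def using uu vv by simp
  finally show ?thesis by simp
qed

lemma ip_AE_cong:
  assumes "L2 a b u" "L2 a b v"
    and "AE x in lebesgue_on {a<..<b}. u x = u' x" "AE x in lebesgue_on {a<..<b}. v x = v' x"
  shows "ip a b u v = ip a b u' v'"
  unfolding ip_def
proof (rule integral_cong_AE)
  have "L2 a b u'" "L2 a b v'"
    using L2_AE_cong[OF assms(1,3)] L2_AE_cong[OF assms(2,4)] by simp_all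
  with assms show "(\<lambda>x. u x * v x) \<in> borel_measurable (lebesgue_on {a<..<b})"
    "(\<lambda>x. u' x * v' x) \<in> borel_measurable (lebesgue_on {a<..<b})"
    by (auto simp: L2_def)
  show "AE x in lebesgue_on {a<..<b}. u x * v x = u' x * v' x"
    using assms(3,4) by eventually_elim simp
qed

section \<open>Primitives\<close>

lemma prim_eq_Icc: "prim a g x = integral\<^sup>L (lebesgue_on {a..x}) g"
  unfolding prim_def by (rule lebesgue_on_finite_diff(1)[where X="{a}"]) auto

lemma prim_eq_integral_Ioo: "prim a g x = integral\<^sup>L (lebesgue_on {a<..<x}) g"
  unfolding prim_def by (rule lebesgue_on_finite_diff(1)[where X="{x}"]) auto

lemma prim_refl [simp]: "prim a g a = 0"
  unfolding prim_def by simp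

lemma prim_eq_integral_indicator:
  assumes "x \<le> b"
  shows "prim a f x = (\<integral>t. indicator {a<..x} t * (indicator {a<..<b} t * f t) \<partial>lebesgue)"
proof -
  have "prim a f x = integral\<^sup>L (lebesgue_on ({a<..x} \<inter> {a<..<b})) f"
    unfolding prim_def by (rule lebesgue_on_finite_diff(1)[where X="{b}"]) (use assms in auto)
  then show ?thesis
    by (simp add: integral_restrict_space indicator_inter_arith mult.assoc)
qed

lemma continuous_on_prim:
  assumes "integrable (lebesgue_on {a<..<b}) (g :: real \<Rightarrow> real)"
  shows "continuous_on {a..b} (prim a g)"
  using indefinite_integral_continuous_real[of a b g] assms
  by (simp add: integrable_Ioo_iff_Icc prim_eq_Icc[abs_def])

lemma prim_diff:
  assumes "integrable (lebesgue_on {a<..<b}) g" "integrable (lebesgue_on {a<..<b}) h" "x \<le> b"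
  shows "prim a (\<lambda>t. g t - h t) x = prim a g x - prim a h x"
  unfolding prim_def using assms by (simp add: integrable_Ioo_imp_Ioc)

lemma prim_eq_antiderivative_diff:
  fixes F f :: "real \<Rightarrow> real"
  assumes "a \<le> x" and F: "\<And>t. t \<in> {a..x} \<Longrightarrow> (F has_real_derivative f t) (at t)"
    and "continuous_on {a..x} f"
  shows "prim a f x = F x - F a"
proof -
  have "prim a f x = integral {a..x} f"
    unfolding prim_eq_Icc using assms(3)
    by (intro lebesgue_integral_eq_integral continuous_imp_integrable_real) auto
  also have "\<dots> = F x - F a"
  proof (rule integral_unique, rule fundamental_theorem_of_calculus[OF \<open>a \<le> x\<close>])
    show "(F has_vector_derivative f t) (at t within {a..x})" if "t \<in> {a..x}" for t
      using F[OF that] has_real_derivative_iff_has_vector_derivative has_vector_derivative_at_within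
      by blast
  qed
  finally show ?thesis .
qed

lemma AE_eq_prim_if_real_derivative:
  assumes "\<And>x. x \<in> {a..b} \<Longrightarrow> (F has_real_derivative f x) (at x)" and "continuous_on {a..b} f"
  shows "AE x in lebesgue_on {a<..<b}. F x = F a + prim a f x"
proof (rule AE_I2)
  fix x assume "x \<in> space (lebesgue_on {a<..<b})"
  then have "prim a f x = F x - F a"
    using assms continuous_on_subset[OF assms(2)] by (intro prim_eq_antiderivative_diff) auto
  then show "F x = F a + prim a f x" by simp
qed

lemma indefinite_integral_mult:
  fixes g h :: "real \<Rightarrow> real" and a x :: real
  assumes g: "integrable lebesgue g" and h: "integrable lebesgue h"
  defines "G \<equiv> \<lambda>x. \<integral>t. indicator {a<..x} t * g t \<partial>lebesgue"
    and "H \<equiv> \<lambda>x. \<integral>t. indicator {a<..x} t * h t \<partial>lebesgue"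
  shows "G x * H x = (\<integral>t. indicator {a<..x} t * (g t * H t + G t * h t) \<partial>lebesgue)"
proof -
  interpret pair_sigma_finite "lebesgue :: real measure" "lebesgue :: real measure"
    by (rule pair_sigma_finite_lebesgue)
  note [measurable] = borel_measurable_integrable[OF g] borel_measurable_integrable[OF h]
    measurable_compose[OF measurable_fst borel_measurable_integrable[OF g]]
    measurable_compose[OF measurable_snd borel_measurable_integrable[OF h]]
  \<comment> \<open>Split the square \<open>(a, x]\<^sup>2\<close> along the diagonal into \<open>s \<le> t\<close> and \<open>t < s\<close>.\<close>
  define L where "L t s = indicator {a<..x} t * g t * (indicator {a<..t} s * h s)" for t s :: real
  define U where "U t s = indicator {a<..x} s * h s * (indicator {a<..<s} t * g t)" for t s :: real
  have split: "L t s + U t s = indicator {a<..x} t * g t * (indicator {a<..x} s * h s)" for t s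
    by (auto simp: L_def U_def indicator_def)
  have L: "integrable (lebesgue \<Otimes>\<^sub>M lebesgue) (case_prod L)"
    by (rule integrable_dominated_by_product_lebesgue[OF g h]) (auto simp: L_def split_beta' indicator_def of_bool_def abs_mult)
  have U: "integrable (lebesgue \<Otimes>\<^sub>M lebesgue) (case_prod U)"
    by (rule integrable_dominated_by_product_lebesgue[OF g h]) (auto simp: U_def split_beta' indicator_def of_bool_def abs_mult)
  have G_open: "G s = (\<integral>t. indicator {a<..<s} t * g t \<partial>lebesgue)" for s
    using prim_eq_integral_Ioo[of a g s] by (simp add: G_def prim_def integral_restrict_space)
  have L_inner: "(\<integral>s. L t s \<partial>lebesgue) = indicator {a<..x} t * g t * H t" for t
    by (simp add: L_def H_def)
  have U_inner: "(\<integral>t. U t s \<partial>lebesgue) = indicator {a<..x} s * h s * G s" for s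
    by (simp add: U_def G_open)
  have L_integrable: "integrable lebesgue (\<lambda>s. L t s)" for t
    using integrable_real_mult_indicator[OF _ h, of "{a<..t}"] by (simp add: L_def mult.commute)
  have U_integrable: "integrable lebesgue (\<lambda>s. U t s)" for t
  proof -
    have "(\<lambda>s. U t s) = (\<lambda>s. (indicator {a<..} t * g t) * (h s * indicator ({a<..x} \<inter> {t<..}) s))"
      by (auto simp: U_def indicator_def fun_eq_iff)
    then show ?thesis
      using integrable_real_mult_indicator[OF _ h, of "{a<..x} \<inter> {t<..}"] by simp
  qed
  have "(\<integral>t. indicator {a<..x} t * (g t * H t + G t * h t) \<partial>lebesgue)
      = (\<integral>t. (\<integral>s. L t s \<partial>lebesgue) \<partial>lebesgue) + (\<integral>s. (\<integral>t. U t s \<partial>lebesgue) \<partial>lebesgue)"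
    using integrable_fst[OF L] integrable_snd[OF U]
    by (simp add: L_inner U_inner algebra_simps)
  also have "(\<integral>s. (\<integral>t. U t s \<partial>lebesgue) \<partial>lebesgue) = (\<integral>t. (\<integral>s. U t s \<partial>lebesgue) \<partial>lebesgue)"
    by (rule Fubini_integral[OF U])
  also have "(\<integral>t. (\<integral>s. L t s \<partial>lebesgue) \<partial>lebesgue) + \<dots>
      = (\<integral>t. (\<integral>s. L t s + U t s \<partial>lebesgue) \<partial>lebesgue)"
    using integrable_fst[OF L] integrable_fst[OF U] L_integrable U_integrable by simp
  also have "\<dots> = G x * H x"
    unfolding split by (simp add: G_def H_def mult.commute)
  finally show ?thesis by simp
qed

lemma prim_mult:
  assumes g: "integrable (lebesgue_on {a<..<b}) g" and h: "integrable (lebesgue_on {a<..<b}) h"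
    and "x \<le> b"
  shows "prim a g x * prim a h x = prim a (\<lambda>t. g t * prim a h t + prim a g t * h t) x"
proof -
  define g' where "g' = (\<lambda>t. indicator {a<..<b} t * g t)"
  define h' where "h' = (\<lambda>t. indicator {a<..<b} t * h t)"
  have "integrable lebesgue g'" "integrable lebesgue h'"
    using g h by (simp_all add: g'_def h'_def integrable_restrict_space)
  define G where "G x = (\<integral>t. indicator {a<..x} t * g' t \<partial>lebesgue)" for x
  define H where "H x = (\<integral>t. indicator {a<..x} t * h' t \<partial>lebesgue)" for x
  have G: "prim a g t = G t" and H: "prim a h t = H t" if "t \<le> b" for t
    using that by (simp_all add: G_def H_def g'_def h'_def prim_eq_integral_indicator)
  have "prim a g x * prim a h x = G x * H x" using \<open>x \<le> b\<close> by (simp add: G H)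
  also have "\<dots> = (\<integral>t. indicator {a<..x} t * (g' t * H t + G t * h' t) \<partial>lebesgue)"
    unfolding G_def H_def by (rule indefinite_integral_mult) fact+
  also have "\<dots> = (\<integral>t. indicator {a<..x} t *
      (indicator {a<..<b} t * (g t * prim a h t + prim a g t * h t)) \<partial>lebesgue)"
    by (intro Bochner_Integration.integral_cong) (auto simp: g'_def h'_def indicator_def G H)
  also have "\<dots> = prim a (\<lambda>t. g t * prim a h t + prim a g t * h t) x"
    by (rule prim_eq_integral_indicator[OF \<open>x \<le> b\<close>, symmetric])
  finally show ?thesis .
qed

lemma AE_zero_if_prim_zero:
  assumes "a < b" and d: "integrable (lebesgue_on {a<..<b}) d"
    and zero: "\<And>x. x \<in> {a<..<b} \<Longrightarrow> prim a d x = 0"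
  shows "AE x in lebesgue_on {a<..<b}. d x = 0"
proof -
  define e where "e = (\<lambda>t. indicator {a<..<b} t * d t)"
  have e: "integrable lebesgue e" using d by (simp add: e_def integrable_restrict_space)
  have "continuous_on (closure {a<..<b}) (prim a d)" using continuous_on_prim[OF d] \<open>a < b\<close> by simp
  from continuous_constant_on_closure[OF this zero]
  have prim_zero: "prim a d y = 0" if "y \<in> {a..b}" for y
    using that \<open>a < b\<close> by simp
  have below: "(\<integral>t. indicator {..x} t * e t \<partial>lebesgue) = 0" for x
  proof -
    define y where "y = max a (min x b)"
    have "indicator {..x} t * e t = indicator {a<..y} t * (indicator {a<..<b} t * d t)" for t
      by (auto simp: e_def indicator_def y_def)
    moreover have "y \<le> b" using \<open>a < b\<close> by (simp add: y_def)
    ultimately have "(\<integral>t. indicator {..x} t * e t \<partial>lebesgue) = prim a d y"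
      by (simp add: prim_eq_integral_indicator)
    also have "\<dots> = 0" using \<open>a < b\<close> by (intro prim_zero) (auto simp: y_def)
    finally show ?thesis .
  qed
  have "(\<lambda>t. indicator {..b} t * e t) = e" by (auto simp: e_def indicator_def fun_eq_iff)
  then have "(\<integral>t. e t \<partial>lebesgue) = 0" using below[of b] by simp
  moreover have "integrable lebesgue (\<lambda>t. indicator {..x} t * e t)" for x
    using integrable_real_mult_indicator[OF _ e, of "{..x}"] by (simp add: mult.commute)
  moreover have "indicator {x<..} t * e t = e t - indicator {..x} t * e t" for x t
    by (simp add: indicator_def)
  ultimately have "(\<integral>t. indicator {x<..} t * e t \<partial>lebesgue) = 0" for x
    using below[of x] e by simp
  then have "AE t in lebesgue. e t = 0" by (rule AE_zero_if_halfline_integrals_zero[OF e])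
  then show ?thesis
    by (subst AE_restrict_space_iff) (auto simp: e_def elim: eventually_mono)
qed

section \<open>Weak derivatives\<close>

lemma has_wderiv_unique:
  assumes "a < b" and g1: "has_wderiv a b u g1" and g2: "has_wderiv a b u g2"
  shows "AE x in lebesgue_on {a<..<b}. g1 x = g2 x"
proof -
  obtain c1 c2 where u1: "AE x in lebesgue_on {a<..<b}. u x = c1 + prim a g1 x"
    and u2: "AE x in lebesgue_on {a<..<b}. u x = c2 + prim a g2 x"
    using g1 g2 unfolding has_wderiv_def by blast
  have int: "integrable (lebesgue_on {a<..<b}) g1" "integrable (lebesgue_on {a<..<b}) g2"
    using g1 g2 by (simp_all add: has_wderiv_def L2_integrable)
  then have int_diff: "integrable (lebesgue_on {a<..<b}) (\<lambda>t. g1 t - g2 t)" by simp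
  define D where "D = prim a (\<lambda>t. g1 t - g2 t)"
  have D: "D x = prim a g1 x - prim a g2 x" if "x \<le> b" for x
    unfolding D_def using int that by (rule prim_diff)
  have "AE x in lebesgue_on {a<..<b}. D x = c2 - c1"
    using u1 u2 AE_space by eventually_elim (simp add: D)
  then have D_const: "D x = c2 - c1" if "x \<in> {a..b}" for x
    unfolding D_def
    by (rule continuous_on_AE_eq_imp_eq[OF \<open>a < b\<close> continuous_on_prim[OF int_diff]
          continuous_on_const _ that, unfolded D_def])
  have "c2 - c1 = 0" using D_const[of a] \<open>a < b\<close> by (simp add: D_def)
  then have "prim a (\<lambda>t. g1 t - g2 t) x = 0" if "x \<in> {a<..<b}" for x
    using D_const[of x] that by (simp add: D_def)
  then have "AE x in lebesgue_on {a<..<b}. g1 x - g2 x = 0"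
    by (rule AE_zero_if_prim_zero[OF \<open>a < b\<close> int_diff])
  then show ?thesis by eventually_elim simp
qed

lemma has_wderiv_wd:
  assumes "has_wderiv a b u g"
  shows "has_wderiv a b u (wd a b u)"
  unfolding wd_def using assms by (rule someI[where P="has_wderiv a b u"])

lemma H10_wd:
  assumes "a < b" and "H10 a b u"
  shows "L2 a b (wd a b u)" and "integral\<^sup>L (lebesgue_on {a<..<b}) (wd a b u) = 0"
    and "AE x in lebesgue_on {a<..<b}. u x = prim a (wd a b u) x"
proof -
  obtain g where g: "L2 a b g" and g0: "integral\<^sup>L (lebesgue_on {a<..<b}) g = 0"
    and u: "AE x in lebesgue_on {a<..<b}. u x = prim a g x"
    using assms(2) unfolding H10_def by blast
  have "has_wderiv a b u g" unfolding has_wderiv_def using g u by auto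
  then have wd: "has_wderiv a b u (wd a b u)" by (rule has_wderiv_wd)
  then show L2: "L2 a b (wd a b u)" by (simp add: has_wderiv_def)
  obtain c where uc: "AE x in lebesgue_on {a<..<b}. u x = c + prim a (wd a b u) x"
    using wd unfolding has_wderiv_def by blast
  have "AE x in lebesgue_on {a<..<b}. prim a g x = c + prim a (wd a b u) x"
    using u uc by eventually_elim simp
  moreover have "continuous_on {a..b} (prim a g)"
    by (rule continuous_on_prim[OF L2_integrable[OF g]])
  moreover have "continuous_on {a..b} (\<lambda>x. c + prim a (wd a b u) x)"
    by (intro continuous_intros continuous_on_prim[OF L2_integrable[OF L2]])
  ultimately have eq: "prim a g x = c + prim a (wd a b u) x" if "x \<in> {a..b}" for x
    using continuous_on_AE_eq_imp_eq[OF \<open>a < b\<close> _ _ _ that] by blast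
  have "c = 0" using eq[of a] \<open>a < b\<close> by simp
  with eq[of b] \<open>a < b\<close> g0 show "integral\<^sup>L (lebesgue_on {a<..<b}) (wd a b u) = 0"
    by (simp add: prim_eq_integral_Ioo)
  show "AE x in lebesgue_on {a<..<b}. u x = prim a (wd a b u) x"
    using uc \<open>c = 0\<close> by simp
qed

lemma H10_imp_L2:
  assumes "a < b" and "H10 a b u"
  shows "L2 a b u"
proof -
  have "L2 a b (prim a (wd a b u))"
    by (rule continuous_on_imp_L2[OF continuous_on_prim[OF L2_integrable[OF H10_wd(1)[OF assms]]]])
  moreover have "AE x in lebesgue_on {a<..<b}. prim a (wd a b u) x = u x"
    using H10_wd(3)[OF assms] by eventually_elim simp
  ultimately show ?thesis by (rule L2_AE_cong)
qed

lemma norm1_sq: "(norm1 a b v)\<^sup>2 = ip a b (wd a b v) (wd a b v)"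
  by (simp add: norm1_def ip_self_nonneg)

section \<open>The Wirtinger and Poincare inequalities\<close>

lemma cot_riccati_solution:
  assumes k: "0 < k" "k * (b - a) < pi"
  obtains \<psi> \<psi>' :: "real \<Rightarrow> real"
  where "\<And>x. x \<in> {a..b} \<Longrightarrow> (\<psi> has_real_derivative \<psi>' x) (at x)"
    and "continuous_on {a..b} \<psi>" and "continuous_on {a..b} \<psi>'"
    and "\<And>x. x \<in> {a..b} \<Longrightarrow> \<psi>' x + (\<psi> x)\<^sup>2 = - k\<^sup>2"
proof -
  \<comment> \<open>the zeros \<open>c\<close> and \<open>c + pi / k\<close> of \<open>sin (k (x - c))\<close> lie symmetrically around \<open>[a, b]\<close>\<close>
  define c where "c = a - (pi / k - (b - a)) / 2"
  have sin_pos: "sin (k * (x - c)) > 0" if "x \<in> {a..b}" for x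
  proof (rule sin_gt_zero)
    have shift: "k * (x - c) = k * (x - a) + (pi - k * (b - a)) / 2"
      using k by (simp add: c_def field_simps)
    have "0 \<le> k * (x - a)" "k * (x - a) \<le> k * (b - a)"
      using that k by (auto intro: mult_left_mono)
    then show "0 < k * (x - c)" "k * (x - c) < pi" using shift k by argo+
  qed
  have cos_sq: "(cos y)\<^sup>2 = 1 - (sin y)\<^sup>2" for y :: real by (simp add: cos_squared_eq)
  define \<psi> where "\<psi> x = k * cos (k * (x - c)) / sin (k * (x - c))" for x
  define \<psi>' where "\<psi>' x = - k\<^sup>2 / (sin (k * (x - c)))\<^sup>2" for x
  show thesis
  proof
    show "(\<psi> has_real_derivative \<psi>' x) (at x)" if "x \<in> {a..b}" for x
      using sin_pos[OF that] unfolding \<psi>_def[abs_def] \<psi>'_def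
      by (auto intro!: derivative_eq_intros simp: field_simps power2_eq_square[symmetric] cos_sq)
    show "\<psi>' x + (\<psi> x)\<^sup>2 = - k\<^sup>2" if "x \<in> {a..b}" for x
      using sin_pos[OF that] by (simp add: \<psi>_def \<psi>'_def field_simps cos_sq)
    show "continuous_on {a..b} \<psi>" "continuous_on {a..b} \<psi>'"
      unfolding \<psi>_def[abs_def] \<psi>'_def[abs_def] using sin_pos
      by (auto intro!: continuous_intros simp: less_imp_neq[symmetric])
  qed
qed

lemma integral_deriv_weighted_prim_square:
  fixes g \<psi> \<psi>' :: "real \<Rightarrow> real"
  assumes g: "L2 a b g" and mean: "integral\<^sup>L (lebesgue_on {a<..<b}) g = 0"
    and \<psi>: "\<And>x. x \<in> {a..b} \<Longrightarrow> (\<psi> has_real_derivative \<psi>' x) (at x)"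
    and \<psi>_cont: "continuous_on {a..b} \<psi>" and \<psi>'_cont: "continuous_on {a..b} \<psi>'"
  defines "D \<equiv> \<lambda>t. \<psi>' t * (prim a g t)\<^sup>2 + \<psi> t * (2 * (g t * prim a g t))"
  shows "integrable (lebesgue_on {a<..<b}) D" and "integral\<^sup>L (lebesgue_on {a<..<b}) D = 0"
proof -
  let ?M = "lebesgue_on {a<..<b}"
  define V where "V = prim a g"
  define W where "W t = 2 * (g t * V t)" for t
  have g_int: "integrable ?M g" by (rule L2_integrable[OF g])
  have V_cont: "continuous_on {a..b} V" unfolding V_def by (rule continuous_on_prim[OF g_int])
  have V_sq: "prim a W x = (V x)\<^sup>2" if "x \<le> b" for x
    using prim_mult[OF g_int g_int that] by (simp add: V_def W_def[abs_def] power2_eq_square algebra_simps)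
  have W_int: "integrable ?M W"
    using L2_integrable_mult[OF g continuous_on_imp_L2[OF V_cont]] by (simp add: W_def[abs_def])
  have "prim a W b = 0" using V_sq[of b] mean by (simp add: V_def prim_eq_integral_Ioo)
  then have W_mean: "integral\<^sup>L ?M W = 0" by (simp add: prim_eq_integral_Ioo)
  have \<psi>'_int: "integrable ?M \<psi>'" by (rule L2_integrable[OF continuous_on_imp_L2[OF \<psi>'_cont]])
  have "(\<lambda>t. \<psi> t * W t) = (\<lambda>t. 2 * (g t * (\<psi> t * V t)))"
    by (simp add: W_def fun_eq_iff algebra_simps)
  moreover have "L2 a b (\<lambda>t. \<psi> t * V t)"
    using \<psi>_cont V_cont by (intro continuous_on_imp_L2) (auto intro!: continuous_intros)
  ultimately have \<psi>W_int: "integrable ?M (\<lambda>t. \<psi> t * W t)"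
    using L2_integrable_mult[OF g] by simp
  have "integrable ?M (\<lambda>t. \<psi>' t * (V t)\<^sup>2)"
    using \<psi>'_cont V_cont by (intro L2_integrable continuous_on_imp_L2) (auto intro!: continuous_intros)
  with \<psi>W_int show D_int: "integrable ?M D" by (simp add: D_def V_def W_def)
  have prim_\<psi>': "prim a \<psi>' x = \<psi> x - \<psi> a" if "x \<in> {a..b}" for x
    using that \<psi> continuous_on_subset[OF \<psi>'_cont, of "{a..x}"]
    by (intro prim_eq_antiderivative_diff) auto
  \<comment> \<open>integration by parts against \<open>\<psi>' = (\<psi> - \<psi> a)'\<close> and \<open>W = (V\<^sup>2)'\<close>\<close>
  have "0 = prim a \<psi>' b * prim a W b" using \<open>prim a W b = 0\<close> by simp
  also have "\<dots> = prim a (\<lambda>t. \<psi>' t * prim a W t + prim a \<psi>' t * W t) b"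
    by (rule prim_mult[OF \<psi>'_int W_int order_refl])
  also have "\<dots> = integral\<^sup>L ?M (\<lambda>t. \<psi>' t * prim a W t + prim a \<psi>' t * W t)"
    by (rule prim_eq_integral_Ioo)
  also have "\<dots> = integral\<^sup>L ?M (\<lambda>t. D t - \<psi> a * W t)"
    by (intro Bochner_Integration.integral_cong) (auto simp: D_def V_sq prim_\<psi>' V_def W_def algebra_simps)
  also have "\<dots> = integral\<^sup>L ?M D"
    using D_int W_int W_mean by simp
  finally show "integral\<^sup>L ?M D = 0" by simp
qed

text \<open>Picone's identity: if \<open>\<psi>' + \<psi>\<^sup>2 = -k\<^sup>2\<close> on \<open>[a, b]\<close> and \<open>V = prim a g\<close>, then
  \<open>0 \<le> \<integral>(g - \<psi> V)\<^sup>2 = \<integral>g\<^sup>2 - k\<^sup>2 \<integral>V\<^sup>2 - \<integral>(\<psi> V\<^sup>2)'\<close>, and the last integral vanishes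
  because \<open>V\<close> vanishes at both ends.\<close>

lemma wirtinger_below_pi:
  fixes g :: "real \<Rightarrow> real"
  assumes g: "L2 a b g" and mean: "integral\<^sup>L (lebesgue_on {a<..<b}) g = 0"
    and k: "0 < k" "k * (b - a) < pi"
  shows "k\<^sup>2 * ip a b (prim a g) (prim a g) \<le> ip a b g g"
proof -
  let ?M = "lebesgue_on {a<..<b}"
  obtain \<psi> \<psi>' where \<psi>: "\<And>x. x \<in> {a..b} \<Longrightarrow> (\<psi> has_real_derivative \<psi>' x) (at x)"
    and \<psi>_cont: "continuous_on {a..b} \<psi>" and \<psi>'_cont: "continuous_on {a..b} \<psi>'"
    and riccati: "\<And>x. x \<in> {a..b} \<Longrightarrow> \<psi>' x + (\<psi> x)\<^sup>2 = - k\<^sup>2"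
    using cot_riccati_solution[OF k] by blast
  define V where "V = prim a g"
  define D where "D t = \<psi>' t * (V t)\<^sup>2 + \<psi> t * (2 * (g t * V t))" for t
  note by_parts = integral_deriv_weighted_prim_square[OF g mean \<psi> \<psi>_cont \<psi>'_cont,
      folded V_def, folded D_def[abs_def]]
  have V: "L2 a b V"
    unfolding V_def by (rule continuous_on_imp_L2[OF continuous_on_prim[OF L2_integrable[OF g]]])
  have "0 \<le> integral\<^sup>L ?M (\<lambda>t. (g t - \<psi> t * V t)\<^sup>2)"
    by (rule integral_nonneg_AE) simp
  also have "\<dots> = integral\<^sup>L ?M (\<lambda>t. g t * g t - k\<^sup>2 * (V t * V t) - D t)"
  proof (intro Bochner_Integration.integral_cong)
    fix t assume "t \<in> space ?M"
    then have "- k\<^sup>2 * (V t * V t) = (\<psi>' t + (\<psi> t)\<^sup>2) * (V t * V t)" by (simp add: riccati)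
    then show "(g t - \<psi> t * V t)\<^sup>2 = g t * g t - k\<^sup>2 * (V t * V t) - D t"
      by (simp add: D_def power2_eq_square algebra_simps)
  qed simp
  also have "\<dots> = ip a b g g - k\<^sup>2 * ip a b V V"
    using L2_integrable_mult[OF g g] L2_integrable_mult[OF V V] by_parts by (simp add: ip_def)
  finally show ?thesis by (simp add: V_def)
qed

lemma wirtinger:
  fixes g :: "real \<Rightarrow> real"
  assumes "a < b" and "L2 a b g" and "integral\<^sup>L (lebesgue_on {a<..<b}) g = 0"
  shows "(pi / (b - a))\<^sup>2 * ip a b (prim a g) (prim a g) \<le> ip a b g g"
proof (rule tendsto_upperbound)
  let ?K = "pi / (b - a)"
  show "((\<lambda>k. k\<^sup>2 * ip a b (prim a g) (prim a g)) \<longlongrightarrow> ?K\<^sup>2 * ip a b (prim a g) (prim a g)) (at_left ?K)"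
    by (intro tendsto_intros)
  have "?K > 0" using \<open>a < b\<close> by simp
  with eventually_at_left_real have "\<forall>\<^sub>F k in at_left ?K. k \<in> {0<..<?K}" .
  then show "\<forall>\<^sub>F k in at_left ?K. k\<^sup>2 * ip a b (prim a g) (prim a g) \<le> ip a b g g"
  proof (rule eventually_mono)
    fix k assume "k \<in> {0<..<?K}"
    with \<open>a < b\<close> have "0 < k" "k * (b - a) < pi" by (auto simp: field_simps)
    with assms(2,3) show "k\<^sup>2 * ip a b (prim a g) (prim a g) \<le> ip a b g g"
      by (rule wirtinger_below_pi)
  qed
qed (simp add: trivial_limit_at_left_real)

lemma poincare:
  assumes "a < b" and "H10 a b u"
  shows "(pi / (b - a))\<^sup>2 * ip a b u u \<le> ip a b (wd a b u) (wd a b u)"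
proof -
  have "ip a b u u = ip a b (prim a (wd a b u)) (prim a (wd a b u))"
    using H10_imp_L2[OF assms] H10_wd(3)[OF assms] by (intro ip_AE_cong) auto
  then show ?thesis using wirtinger[OF \<open>a < b\<close> H10_wd(1,2)[OF assms]] by simp
qed

section \<open>The first eigenvalue of \<open>A\<close>\<close>

lemma eigenfunction_energy:
  assumes "a < b" and "domA a b u" and eig: "AE x in lebesgue_on {a<..<b}. opA a b u x = l * u x"
  shows "ip a b (wd a b u) (wd a b u) = l * ip a b u u"
proof -
  let ?M = "lebesgue_on {a<..<b}"
  have H10: "H10 a b u" and "H1 a b (wd a b u)" using assms(2) by (auto simp: domA_def)
  define g where "g = wd a b u"
  define h where "h = wd a b g"
  have g: "L2 a b g" and g_mean: "integral\<^sup>L ?M g = 0"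
    and u: "AE x in ?M. u x = prim a g x"
    using H10_wd[OF \<open>a < b\<close> H10] by (simp_all add: g_def)
  obtain h' where "has_wderiv a b g h'" using \<open>H1 a b (wd a b u)\<close> by (auto simp: H1_def g_def)
  then obtain c where h: "L2 a b h" and g_eq: "AE x in ?M. g x = c + prim a h x"
    using has_wderiv_wd unfolding has_wderiv_def h_def by blast
  define V where "V = prim a g"
  define W where "W = prim a h"
  have g_int: "integrable ?M g" and h_int: "integrable ?M h" using g h by (simp_all add: L2_integrable)
  have V: "L2 a b V" and W: "L2 a b W"
    unfolding V_def W_def using g_int h_int by (simp_all add: continuous_on_imp_L2 continuous_on_prim)
  have gW: "integrable ?M (\<lambda>t. g t * W t)" and Vh: "integrable ?M (\<lambda>t. V t * h t)"
    using L2_integrable_mult[OF g W] L2_integrable_mult[OF V h] by simp_all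
  have "prim a g b * prim a h b = prim a (\<lambda>t. g t * W t + V t * h t) b"
    unfolding V_def W_def by (rule prim_mult[OF g_int h_int order_refl])
  then have parts: "integral\<^sup>L ?M (\<lambda>t. g t * W t) + integral\<^sup>L ?M (\<lambda>t. V t * h t) = 0"
    using g_mean gW Vh by (simp add: prim_eq_integral_Ioo)
  have "ip a b g g = integral\<^sup>L ?M (\<lambda>t. g t * (c + W t))"
    unfolding ip_def using g W g_eq
    by (intro integral_cong_AE) (auto simp: L2_def W_def elim: eventually_mono)
  also have "\<dots> = integral\<^sup>L ?M (\<lambda>t. g t * W t)"
    using g_int gW g_mean by (simp add: distrib_left)
  finally have gg: "ip a b g g = integral\<^sup>L ?M (\<lambda>t. g t * W t)" .
  have "AE x in ?M. h x = - l * V x"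
    using eig u by eventually_elim (simp add: opA_def h_def g_def V_def)
  then have "integral\<^sup>L ?M (\<lambda>t. V t * h t) = integral\<^sup>L ?M (\<lambda>t. - l * (V t * V t))"
    using V h by (intro integral_cong_AE) (auto simp: L2_def elim: eventually_mono)
  then have Vh_eq: "integral\<^sup>L ?M (\<lambda>t. V t * h t) = - l * ip a b V V" by (simp add: ip_def)
  have "ip a b u u = ip a b V V"
    using H10_imp_L2[OF \<open>a < b\<close> H10] u by (intro ip_AE_cong) (auto simp: V_def)
  with gg Vh_eq parts show ?thesis by (simp add: g_def)
qed

lemma eigenvalue_A_ge:
  assumes "a < b" and "is_eigenvalue_A a b l"
  shows "(pi / (b - a))\<^sup>2 \<le> l"
proof -
  obtain u where u: "domA a b u" and nonzero: "\<not> (AE x in lebesgue_on {a<..<b}. u x = 0)"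
    and eig: "AE x in lebesgue_on {a<..<b}. opA a b u x = l * u x"
    using assms(2) unfolding is_eigenvalue_A_def by blast
  have H10: "H10 a b u" using u by (simp add: domA_def)
  have "(pi / (b - a))\<^sup>2 * ip a b u u \<le> l * ip a b u u"
    using poincare[OF \<open>a < b\<close> H10] eigenfunction_energy[OF \<open>a < b\<close> u eig] by simp
  moreover have "0 < ip a b u u" by (rule ip_self_pos[OF H10_imp_L2[OF \<open>a < b\<close> H10] nonzero])
  ultimately show ?thesis by simp
qed

lemma is_eigenvalue_A_sin:
  assumes "a < b"
  shows "is_eigenvalue_A a b ((pi / (b - a))\<^sup>2)"
proof -
  let ?M = "lebesgue_on {a<..<b}"
  define K where "K = pi / (b - a)"
  have "K > 0" and K_len: "K * (b - a) = pi" using \<open>a < b\<close> by (simp_all add: K_def)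
  define u where "u x = sin (K * (x - a))" for x
  define g where "g x = K * cos (K * (x - a))" for x
  define h where "h x = - K\<^sup>2 * sin (K * (x - a))" for x
  have u_deriv: "(u has_real_derivative g x) (at x)" for x
    unfolding u_def[abs_def] g_def by (auto intro!: derivative_eq_intros)
  have g_deriv: "(g has_real_derivative h x) (at x)" for x
    unfolding g_def[abs_def] h_def by (auto intro!: derivative_eq_intros simp: power2_eq_square)
  have g_cont: "continuous_on {a..b} g" and h_cont: "continuous_on {a..b} h"
    unfolding g_def[abs_def] h_def[abs_def] by (intro continuous_intros)+
  have g: "L2 a b g" and h: "L2 a b h" using g_cont h_cont by (simp_all add: continuous_on_imp_L2)
  have u_prim: "AE x in ?M. u x = prim a g x"
    using AE_eq_prim_if_real_derivative[OF u_deriv g_cont] by (simp add: u_def)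
  have g_prim: "AE x in ?M. g x = K + prim a h x"
    using AE_eq_prim_if_real_derivative[OF g_deriv h_cont] by (simp add: g_def)
  have "integral\<^sup>L ?M g = u b - u a"
    using prim_eq_antiderivative_diff[OF _ u_deriv continuous_on_subset[OF g_cont]] \<open>a < b\<close>
    by (simp add: prim_eq_integral_Ioo)
  then have "H10 a b u" unfolding H10_def using g u_prim K_len by (auto simp: u_def)
  have u_wd: "has_wderiv a b u g" unfolding has_wderiv_def using g u_prim by auto
  have "AE x in ?M. wd a b u x = g x"
    by (rule has_wderiv_unique[OF \<open>a < b\<close> has_wderiv_wd[OF u_wd] u_wd])
  with g_prim have "AE x in ?M. wd a b u x = K + prim a h x" by eventually_elim simp
  then have wd_u_wd: "has_wderiv a b (wd a b u) h" unfolding has_wderiv_def using h by blast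
  have wd_wd_u: "AE x in ?M. wd a b (wd a b u) x = h x"
    by (rule has_wderiv_unique[OF \<open>a < b\<close> has_wderiv_wd[OF wd_u_wd] wd_u_wd])
  have "domA a b u" unfolding domA_def H1_def using \<open>H10 a b u\<close> wd_u_wd by blast
  moreover have "AE x in ?M. opA a b u x = K\<^sup>2 * u x"
    using wd_wd_u by eventually_elim (simp add: opA_def h_def u_def)
  moreover have "\<not> (AE x in ?M. u x = 0)"
  proof (rule not_AE_zero_if_pos[OF \<open>a < b\<close>])
    fix x assume "x \<in> {a<..<b}"
    then have "0 < K * (x - a)" "K * (x - a) < K * (b - a)" using \<open>K > 0\<close> by auto
    then show "0 < u x" unfolding u_def using K_len by (intro sin_gt_zero) auto
  qed
  ultimately show ?thesis unfolding is_eigenvalue_A_def K_def by blast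
qed

lemma lambda1_eq:
  assumes "a < b"
  shows "lambda1 a b = (pi / (b - a))\<^sup>2"
  unfolding lambda1_def
  by (rule cInf_eq_minimum) (use is_eigenvalue_A_sin[OF assms] eigenvalue_A_ge[OF assms] in auto)

lemma omega_pos_sq:
  assumes "a < b"
  shows "0 < omega a b" and "(omega a b)\<^sup>2 = 1 + 1 / lambda1 a b"
proof -
  have "0 < lambda1 a b" using assms by (simp add: lambda1_eq)
  then show "0 < omega a b" and "(omega a b)\<^sup>2 = 1 + 1 / lambda1 a b"
    by (simp_all add: omega_def field_simps)
qed

lemma ip1_abs_le:
  assumes "a < b" and u: "H10 a b u" and v: "H10 a b v" and "0 < t"
  shows "2 * \<bar>ip1 a b u v\<bar> \<le> t * tnorm1_sq a b u + (omega a b)\<^sup>2 * (norm1 a b v)\<^sup>2 / t"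
proof -
  have poinc: "ip a b v v \<le> (norm1 a b v)\<^sup>2 / lambda1 a b"
    using poincare[OF \<open>a < b\<close> v] \<open>a < b\<close> by (simp add: lambda1_eq norm1_sq field_simps)
  have "2 * \<bar>ip1 a b u v\<bar> \<le> 2 * \<bar>ip a b u v\<bar> + 2 * \<bar>ip a b (wd a b u) (wd a b v)\<bar>"
    unfolding ip1_def using abs_triangle_ineq[of "ip a b u v" "ip a b (wd a b u) (wd a b v)"]
    by argo
  also have "\<dots> \<le> t * ip a b u u + ip a b v v / t
      + (t * ip a b (wd a b u) (wd a b u) + ip a b (wd a b v) (wd a b v) / t)"
    using H10_imp_L2[OF \<open>a < b\<close> u] H10_imp_L2[OF \<open>a < b\<close> v]
      H10_wd(1)[OF \<open>a < b\<close> u] H10_wd(1)[OF \<open>a < b\<close> v] \<open>0 < t\<close>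
    by (intro add_mono ip_abs_le_weighted)
  also have "\<dots> = t * tnorm1_sq a b u + (ip a b v v + (norm1 a b v)\<^sup>2) / t"
    by (simp add: tnorm1_sq_def norm1_sq algebra_simps add_divide_distrib)
  also have "\<dots> \<le> t * tnorm1_sq a b u + ((norm1 a b v)\<^sup>2 / lambda1 a b + (norm1 a b v)\<^sup>2) / t"
    using poinc \<open>0 < t\<close> by (simp add: divide_right_mono)
  also have "\<dots> = t * tnorm1_sq a b u + (omega a b)\<^sup>2 * (norm1 a b v)\<^sup>2 / t"
    by (simp add: omega_pos_sq[OF \<open>a < b\<close>] algebra_simps add_divide_distrib)
  finally show ?thesis .
qed

lemma ip_wd_abs_le:
  assumes "a < b" and F: "L2 a b F" and v: "H10 a b v" and "0 < k"
  shows "\<bar>ip a b F (wd a b v)\<bar> \<le> ip a b F F / k + k / 4 * (norm1 a b v)\<^sup>2"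
proof -
  have "2 * \<bar>ip a b F (wd a b v)\<bar> \<le> (2 / k) * ip a b F F + ip a b (wd a b v) (wd a b v) / (2 / k)"
    using F H10_wd(1)[OF \<open>a < b\<close> v] by (rule ip_abs_le_weighted) (use \<open>0 < k\<close> in simp)
  then show ?thesis using \<open>0 < k\<close> by (simp add: norm1_sq field_simps)
qed

definition memory_coupling ::
    "real \<Rightarrow> real \<Rightarrow> (real \<Rightarrow> real) \<Rightarrow> (real \<Rightarrow> real) \<times> (real \<Rightarrow> real \<Rightarrow> real) \<Rightarrow> real" where
  "memory_coupling a b \<mu> z =
     integral\<^sup>L (lebesgue_on {0<..}) (\<lambda>s. \<mu> s * ip1 a b (fst z) (snd z s)) / sqrt (kappa \<mu>)"

lemma Lambda_eq_Lambda0_minus_coupling: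
  "Lambda a b f \<mu> \<epsilon> z = Lambda a b f \<mu> 0 z - \<epsilon> * memory_coupling a b \<mu> z"
  by (simp add: Lambda_def Let_def memory_coupling_def)

lemma normH_sq_nonneg:
  assumes "\<And>s. 0 < s \<Longrightarrow> 0 \<le> \<mu> s"
  shows "0 \<le> normH_sq a b \<mu> z"
proof -
  have "0 \<le> normM_sq a b \<mu> (snd z)"
    unfolding normM_sq_def using assms by (intro integral_nonneg_AE AE_I2) auto
  then show ?thesis using ip_self_nonneg[of a b "fst z"] by (simp add: normH_sq_def tnorm1_sq_def)
qed

lemma normH_sq_le_Lambda0:
  assumes "a < b" and f: "L2 a b f"
    and \<mu>_nonneg: "\<And>s. 0 < s \<Longrightarrow> 0 \<le> \<mu> s" and \<mu>: "integrable (lebesgue_on {0<..}) \<mu>"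
    and \<kappa>: "0 < kappa \<mu>" and z: "inH a b \<mu> z"
  shows "normH_sq a b \<mu> z \<le> 2 * Lambda a b f \<mu> 0 z"
proof -
  let ?S = "lebesgue_on {0<..} :: real measure"
  define F where "F = prim a f"
  have F: "L2 a b F"
    unfolding F_def by (rule continuous_on_imp_L2[OF continuous_on_prim[OF L2_integrable[OF f]]])
  have \<eta>: "AE s in ?S. H10 a b (snd z s)"
    and M_int: "integrable ?S (\<lambda>s. \<mu> s * (norm1 a b (snd z s))\<^sup>2)"
    using z by (simp_all add: inH_def inM_def)
  define T where "T = integral\<^sup>L ?S (\<lambda>s. \<mu> s * ip a b F (wd a b (snd z s)))"
  have "AE s in ?S. \<bar>\<mu> s * ip a b F (wd a b (snd z s))\<bar>
      \<le> \<mu> s * (ip a b F F / kappa \<mu> + kappa \<mu> / 4 * (norm1 a b (snd z s))\<^sup>2)"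
    using \<eta>
  proof (rule AE_mp, intro AE_I2 impI)
    fix s assume "s \<in> space ?S" "H10 a b (snd z s)"
    then show "\<bar>\<mu> s * ip a b F (wd a b (snd z s))\<bar>
        \<le> \<mu> s * (ip a b F F / kappa \<mu> + kappa \<mu> / 4 * (norm1 a b (snd z s))\<^sup>2)"
      using ip_wd_abs_le[OF \<open>a < b\<close> F _ \<kappa>] \<mu>_nonneg[of s]
      by (auto simp: abs_mult intro: mult_left_mono)
  qed
  note bound = weighted_affine_integral[OF \<mu> M_int, of "ip a b F F / kappa \<mu>" "kappa \<mu> / 4"]
  have "\<bar>T\<bar> \<le> integral\<^sup>L ?S (\<lambda>s. \<mu> s * (ip a b F F / kappa \<mu> + kappa \<mu> / 4 * (norm1 a b (snd z s))\<^sup>2))"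
    unfolding T_def by (rule abs_integral_le_AE_bound[OF bound(1)]) fact
  also have "\<dots> = ip a b F F + kappa \<mu> / 4 * normM_sq a b \<mu> (snd z)"
    using \<kappa> unfolding bound(2) by (simp add: kappa_def normM_sq_def)
  finally have "\<bar>T\<bar> \<le> ip a b F F + kappa \<mu> / 4 * normM_sq a b \<mu> (snd z)" .
  then have "- (2 / kappa \<mu> * T) \<le> 2 / kappa \<mu> * ip a b F F + normM_sq a b \<mu> (snd z) / 2"
    using \<kappa> by (simp add: abs_le_iff field_simps)
  moreover have "Lambda a b f \<mu> 0 z = normH_sq a b \<mu> z + 2 / kappa \<mu> * T + 2 / kappa \<mu> * ip a b F F"
    by (simp add: Lambda_def Let_def T_def F_def)
  moreover have "0 \<le> tnorm1_sq a b (fst z)" using ip_self_nonneg[of a b "fst z"] by (simp add: tnorm1_sq_def)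
  ultimately show ?thesis by (simp add: normH_sq_def)
qed

lemma memory_coupling_abs_le:
  assumes "a < b"
    and \<mu>_nonneg: "\<And>s. 0 < s \<Longrightarrow> 0 \<le> \<mu> s" and \<mu>: "integrable (lebesgue_on {0<..}) \<mu>"
    and \<kappa>: "0 < kappa \<mu>" and z: "inH a b \<mu> z"
  shows "\<bar>memory_coupling a b \<mu> z\<bar> \<le> omega a b * normH_sq a b \<mu> z / 2"
proof -
  let ?S = "lebesgue_on {0<..} :: real measure"
  define \<omega> where "\<omega> = omega a b"
  define r where "r = sqrt (kappa \<mu>)"
  \<comment> \<open>the Young weight that balances \<open>U\<close> against the memory norm\<close>
  define t where "t = \<omega> / r"
  define U where "U = tnorm1_sq a b (fst z)"
  have "0 < \<omega>" "0 < r" using omega_pos_sq(1)[OF \<open>a < b\<close>] \<kappa> by (simp_all add: \<omega>_def r_def)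
  then have "0 < t" by (simp add: t_def)
  have u: "H10 a b (fst z)" and \<eta>: "AE s in ?S. H10 a b (snd z s)"
    and M_int: "integrable ?S (\<lambda>s. \<mu> s * (norm1 a b (snd z s))\<^sup>2)"
    using z by (simp_all add: inH_def inM_def)
  have "AE s in ?S. \<bar>\<mu> s * ip1 a b (fst z) (snd z s)\<bar>
      \<le> \<mu> s * (t * U / 2 + \<omega>\<^sup>2 / (2 * t) * (norm1 a b (snd z s))\<^sup>2)"
    using \<eta>
  proof (rule AE_mp, intro AE_I2 impI)
    fix s assume "s \<in> space ?S" "H10 a b (snd z s)"
    with ip1_abs_le[OF \<open>a < b\<close> u _ \<open>0 < t\<close>]
    have "\<bar>ip1 a b (fst z) (snd z s)\<bar> \<le> t * U / 2 + \<omega>\<^sup>2 / (2 * t) * (norm1 a b (snd z s))\<^sup>2"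
      by (simp add: U_def \<omega>_def field_simps)
    with \<open>s \<in> space ?S\<close> show "\<bar>\<mu> s * ip1 a b (fst z) (snd z s)\<bar>
        \<le> \<mu> s * (t * U / 2 + \<omega>\<^sup>2 / (2 * t) * (norm1 a b (snd z s))\<^sup>2)"
      using \<mu>_nonneg[of s] by (auto simp: abs_mult intro: mult_left_mono)
  qed
  note bound = weighted_affine_integral[OF \<mu> M_int, of "t * U / 2" "\<omega>\<^sup>2 / (2 * t)"]
  have "\<bar>integral\<^sup>L ?S (\<lambda>s. \<mu> s * ip1 a b (fst z) (snd z s))\<bar>
      \<le> integral\<^sup>L ?S (\<lambda>s. \<mu> s * (t * U / 2 + \<omega>\<^sup>2 / (2 * t) * (norm1 a b (snd z s))\<^sup>2))"
    by (rule abs_integral_le_AE_bound[OF bound(1)]) fact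
  also have "\<dots> = t * U / 2 * (r * r) + \<omega>\<^sup>2 / (2 * t) * normM_sq a b \<mu> (snd z)"
    unfolding bound(2) using \<kappa> by (simp add: r_def kappa_def normM_sq_def)
  also have "\<dots> = r * (\<omega> * normH_sq a b \<mu> z / 2)"
    using \<open>0 < \<omega>\<close> \<open>0 < r\<close> by (simp add: t_def U_def normH_sq_def field_simps power2_eq_square)
  finally show ?thesis
    using \<open>0 < r\<close> by (simp add: memory_coupling_def r_def[symmetric] \<omega>_def abs_divide field_simps)
qed

theorem lemma6p1:
  fixes a b :: real and f \<mu> :: "real \<Rightarrow> real"
    and \<alpha> \<epsilon> :: real and z :: "(real \<Rightarrow> real) \<times> (real \<Rightarrow> real \<Rightarrow> real)"
  assumes ab: "a < b"
    and f: "L2 a b f"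
    and mu_nonneg: "\<forall>s>0. \<mu> s \<ge> 0"
    and mu_nonzero: "\<exists>s>0. \<mu> s \<noteq> 0"
    and mu_noninc: "\<forall>s t. 0 < s \<and> s \<le> t \<longrightarrow> \<mu> t \<le> \<mu> s"
    and mu_ac: "abs_cont_pos \<mu>"
    and mu_int: "integrable (lebesgue_on {0<..}) \<mu>"
    and kappa_pos: "kappa \<mu> > 0"
    and mu_moment_int: "integrable (lebesgue_on {0<..}) (\<lambda>s. s * \<mu> s)"
    and mu_moment: "integral\<^sup>L (lebesgue_on {0<..}) (\<lambda>s. s * \<mu> s) = 1"
    and mu_lim0: "\<exists>L. (\<mu> \<longlongrightarrow> L) (at_right 0)"
    and mu_decay: "\<exists>\<delta>>0. AE s in lebesgue_on {0<..}.
                     \<exists>d. (\<mu> has_real_derivative d) (at s) \<and> d + \<delta> * \<mu> s \<le> 0"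
    and eps: "0 < \<alpha>" "\<alpha> < \<epsilon>" "\<epsilon> < 1 / (2 * omega a b)"
    and z: "inH a b \<mu> z"
  shows "Lambda a b f \<mu> \<alpha> z \<le> Lambda a b f \<mu> \<epsilon> z / (1 - omega a b * \<epsilon>)
       \<and> Lambda a b f \<mu> \<epsilon> z / (1 - omega a b * \<epsilon>)
           \<le> Lambda a b f \<mu> \<alpha> z / (1 - 2 * omega a b * \<epsilon>)"
proof -
  have \<mu>_nonneg: "\<And>s. 0 < s \<Longrightarrow> 0 \<le> \<mu> s" using mu_nonneg by auto
  define P where "P = Lambda a b f \<mu> 0 z"
  define Y where "Y = memory_coupling a b \<mu> z"
  have energy: "normH_sq a b \<mu> z \<le> 2 * P"
    unfolding P_def by (rule normH_sq_le_Lambda0[OF ab f \<mu>_nonneg mu_int kappa_pos z])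
  have coupling: "\<bar>Y\<bar> \<le> omega a b * normH_sq a b \<mu> z / 2"
    unfolding Y_def by (rule memory_coupling_abs_le[OF ab \<mu>_nonneg mu_int kappa_pos z])
  have "0 < omega a b" by (rule omega_pos_sq(1)[OF ab])
  have "0 \<le> P" using energy normH_sq_nonneg[of \<mu> a b z, OF \<mu>_nonneg] by (simp add: P_def)
  moreover have "\<bar>Y\<bar> \<le> omega a b * P"
    using coupling mult_left_mono[OF energy less_imp_le[OF \<open>0 < omega a b\<close>]] by simp
  ultimately have "P - \<alpha> * Y \<le> (P - \<epsilon> * Y) / (1 - omega a b * \<epsilon>)"
    and "(P - \<epsilon> * Y) / (1 - omega a b * \<epsilon>) \<le> (P - \<alpha> * Y) / (1 - 2 * omega a b * \<epsilon>)"
    by (rule perturbation_bounds[OF _ _ \<open>0 < omega a b\<close> eps])+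
  then show ?thesis
    unfolding Lambda_eq_Lambda0_minus_coupling[of a b f \<mu> \<alpha>]
      Lambda_eq_Lambda0_minus_coupling[of a b f \<mu> \<epsilon>] P_def Y_def
    by simp
qed

end
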